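(* Let $(\Theta,\mathbf{Q},\leq)$ be a $\Theta$-projective system of size $t$ in a triangulated category $\mathcal{T}$, with triangles $K(i)\to Q(i)\xrightarrow{\beta_i}\Theta(i)\to K(i)[1]$. Then: (a) $\mathrm{Hom}_\mathcal{T}(K(j),\Theta(i))=0=\mathrm{Hom}_\mathcal{T}(\Theta(j),\Theta(i)[1])$ for all $j\ge i$; (b) $\mathrm{Hom}_\mathcal{T}(\beta_j,\Theta(i)):\mathrm{Hom}_\mathcal{T}(\Theta(j),\Theta(i))\to\mathrm{Hom}_\mathcal{T}(Q(j),\Theta(i))$ is an isomorphism of abelian groups for all $j\ge i$; (c) if $\mathrm{Hom}_\mathcal{T}(K(j)[2],\Theta(i))=0$ for all $i,j\in[1,t]$, then $\mathrm{Hom}_\mathcal{T}(\Theta(i),\Theta(j)[-1])=0$ for all $i,j$.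
   Context: $\mathfrak{F}(\mathcal{X})$: objects $M$ admitting distinguished triangles $M_{k-1}\to M_k\to X_k\to M_{k-1}[1]$ ($k=0,\dots,n$), $M_{-1}=0=X_0$, $M_n=M$, $X_k\in\mathcal{X}$ for $k\ge1$. A $\Theta$-projective system of size $t$: $\le$ a linear order on $[1,t]$; $\Theta(1),\dots,\Theta(t)$ non-zero with $\mathrm{Hom}(\Theta(j),\Theta(i))=0$ for $j>i$; $Q(1),\dots,Q(t)$ indecomposable with $Q=\bigoplus Q(i)$ satisfying $\mathrm{Hom}(Q,\Theta(j)[1])=0=\mathrm{Hom}(Q,\Theta(j)[-1])$ for all $j$; for each $i$ a distinguished triangle $K(i)\to Q(i)\xrightarrow{\beta_i}\Theta(i)\to K(i)[1]$ with $K(i)\in\mathfrak{F}(\{\Theta(j):j>i\})$ and $\mathrm{Hom}(K(i)[1],\Theta(i))=0$. Inequalities $j\ge i$, $j>i$ refer to $\le$. *)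

theory Defs
  imports "HOL-Algebra.Group" "HOL-Algebra.FiniteProduct"
begin

section \<open>Triangulated categories (with the shift an additive automorphism)\<close>

text \<open>A morphism is typed by membership
  in the hom sets; composition, addition are total operations which are only
  constrained on well-typed arguments.  cmp g f denotes g composed after f.\<close>

record ('o, 'm) tcat =
  Ob   :: "'o set"
  Hom  :: "'o \<Rightarrow> 'o \<Rightarrow> 'm set"
  cmp  :: "'m \<Rightarrow> 'm \<Rightarrow> 'm"
  idt  :: "'o \<Rightarrow> 'm"
  plus :: "'m \<Rightarrow> 'm \<Rightarrow> 'm"
  zer  :: "'o \<Rightarrow> 'o \<Rightarrow> 'm"
  sh   :: "'o \<Rightarrow> 'o"
  shm  :: "'m \<Rightarrow> 'm"
  Dist :: "('o \<times> 'o \<times> 'o \<times> 'm \<times> 'm \<times> 'm) set"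

definition homgrp :: "('o, 'm) tcat \<Rightarrow> 'o \<Rightarrow> 'o \<Rightarrow> 'm monoid" where
  "homgrp C X Y = \<lparr>carrier = Hom C X Y, mult = plus C, one = zer C X Y\<rparr>"

definition tneg :: "('o, 'm) tcat \<Rightarrow> 'o \<Rightarrow> 'o \<Rightarrow> 'm \<Rightarrow> 'm" where
  "tneg C X Y f = inv\<^bsub>homgrp C X Y\<^esub> f"

definition unsh :: "('o, 'm) tcat \<Rightarrow> 'o \<Rightarrow> 'o" where
  "unsh C X = inv_into (Ob C) (sh C) X"

definition hom_zero :: "('o, 'm) tcat \<Rightarrow> 'o \<Rightarrow> 'o \<Rightarrow> bool" where
  "hom_zero C X Y \<longleftrightarrow> Hom C X Y = {zer C X Y}"

definition is_zero_obj :: "('o, 'm) tcat \<Rightarrow> 'o \<Rightarrow> bool" where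
  "is_zero_obj C Z \<longleftrightarrow> Z \<in> Ob C \<and>
     (\<forall>X \<in> Ob C. (\<exists>!f. f \<in> Hom C Z X) \<and> (\<exists>!f. f \<in> Hom C X Z))"

definition is_iso :: "('o, 'm) tcat \<Rightarrow> 'o \<Rightarrow> 'o \<Rightarrow> 'm \<Rightarrow> bool" where
  "is_iso C X Y f \<longleftrightarrow> f \<in> Hom C X Y \<and>
     (\<exists>g \<in> Hom C Y X. cmp C g f = idt C X \<and> cmp C f g = idt C Y)"

definition biprod :: "('o, 'm) tcat \<Rightarrow> 'o \<Rightarrow> 'o \<Rightarrow> 'o \<Rightarrow> 'm \<Rightarrow> 'm \<Rightarrow> 'm \<Rightarrow> 'm \<Rightarrow> bool" where
  "biprod C A B S p1 p2 i1 i2 \<longleftrightarrow> S \<in> Ob C \<and>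
     p1 \<in> Hom C S A \<and> p2 \<in> Hom C S B \<and> i1 \<in> Hom C A S \<and> i2 \<in> Hom C B S \<and>
     cmp C p1 i1 = idt C A \<and> cmp C p2 i2 = idt C B \<and>
     cmp C p1 i2 = zer C B A \<and> cmp C p2 i1 = zer C A B \<and>
     plus C (cmp C i1 p1) (cmp C i2 p2) = idt C S"

definition biprod_fam :: "('o, 'm) tcat \<Rightarrow> 'i set \<Rightarrow> ('i \<Rightarrow> 'o) \<Rightarrow> 'o \<Rightarrow> ('i \<Rightarrow> 'm) \<Rightarrow> ('i \<Rightarrow> 'm) \<Rightarrow> bool" where
  "biprod_fam C I A S p e \<longleftrightarrow> S \<in> Ob C \<and>
     (\<forall>i \<in> I. p i \<in> Hom C S (A i) \<and> e i \<in> Hom C (A i) S) \<and>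
     (\<forall>i \<in> I. \<forall>j \<in> I. cmp C (p i) (e j) = (if i = j then idt C (A i) else zer C (A j) (A i))) \<and>
     finprod (homgrp C S S) (\<lambda>i. cmp C (e i) (p i)) I = idt C S"

definition indecomposable :: "('o, 'm) tcat \<Rightarrow> 'o \<Rightarrow> bool" where
  "indecomposable C X \<longleftrightarrow> X \<in> Ob C \<and> \<not> is_zero_obj C X \<and>
     (\<forall>A B p1 p2 i1 i2. A \<in> Ob C \<and> B \<in> Ob C \<and> biprod C A B X p1 p2 i1 i2 \<longrightarrow>
         is_zero_obj C A \<or> is_zero_obj C B)"

definition tri_morph :: "('o, 'm) tcat \<Rightarrow> ('o \<times> 'o \<times> 'o \<times> 'm \<times> 'm \<times> 'm) \<Rightarrow>
    ('o \<times> 'o \<times> 'o \<times> 'm \<times> 'm \<times> 'm) \<Rightarrow> 'm \<Rightarrow> 'm \<Rightarrow> 'm \<Rightarrow> bool" where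
  "tri_morph C T T' f g h \<longleftrightarrow>
     (case T of (X, Y, Z, u, v, w) \<Rightarrow> case T' of (X', Y', Z', u', v', w') \<Rightarrow>
       f \<in> Hom C X X' \<and> g \<in> Hom C Y Y' \<and> h \<in> Hom C Z Z' \<and>
       cmp C g u = cmp C u' f \<and> cmp C h v = cmp C v' g \<and>
       cmp C (shm C f) w = cmp C w' h)"

definition tri_iso :: "('o, 'm) tcat \<Rightarrow> ('o \<times> 'o \<times> 'o \<times> 'm \<times> 'm \<times> 'm) \<Rightarrow>
    ('o \<times> 'o \<times> 'o \<times> 'm \<times> 'm \<times> 'm) \<Rightarrow> 'm \<Rightarrow> 'm \<Rightarrow> 'm \<Rightarrow> bool" where
  "tri_iso C T T' f g h \<longleftrightarrow> tri_morph C T T' f g h \<and>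
     (case T of (X, Y, Z, u, v, w) \<Rightarrow> case T' of (X', Y', Z', u', v', w') \<Rightarrow>
        is_iso C X X' f \<and> is_iso C Y Y' g \<and> is_iso C Z Z' h)"

definition triangulated :: "('o, 'm) tcat \<Rightarrow> bool" where
  "triangulated C \<longleftrightarrow>
   \<comment> \<open>category\<close>
   (\<forall>X Y. (X \<notin> Ob C \<or> Y \<notin> Ob C) \<longrightarrow> Hom C X Y = {}) \<and>
   (\<forall>X \<in> Ob C. idt C X \<in> Hom C X X) \<and>
   (\<forall>X Y Z f g. f \<in> Hom C X Y \<longrightarrow> g \<in> Hom C Y Z \<longrightarrow> cmp C g f \<in> Hom C X Z) \<and>
   (\<forall>W X Y Z f g h. f \<in> Hom C W X \<longrightarrow> g \<in> Hom C X Y \<longrightarrow> h \<in> Hom C Y Z \<longrightarrow>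
       cmp C h (cmp C g f) = cmp C (cmp C h g) f) \<and>
   (\<forall>X Y f. f \<in> Hom C X Y \<longrightarrow> cmp C (idt C Y) f = f \<and> cmp C f (idt C X) = f) \<and>
   \<comment> \<open>preadditive\<close>
   (\<forall>X \<in> Ob C. \<forall>Y \<in> Ob C. comm_group (homgrp C X Y)) \<and>
   (\<forall>X Y Z f g g'. f \<in> Hom C X Y \<longrightarrow> g \<in> Hom C Y Z \<longrightarrow> g' \<in> Hom C Y Z \<longrightarrow>
       cmp C (plus C g g') f = plus C (cmp C g f) (cmp C g' f)) \<and>
   (\<forall>X Y Z f f' g. f \<in> Hom C X Y \<longrightarrow> f' \<in> Hom C X Y \<longrightarrow> g \<in> Hom C Y Z \<longrightarrow>
       cmp C g (plus C f f') = plus C (cmp C g f) (cmp C g f')) \<and>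
   \<comment> \<open>additive\<close>
   (\<exists>Z. is_zero_obj C Z) \<and>
   (\<forall>A \<in> Ob C. \<forall>B \<in> Ob C. \<exists>S p1 p2 i1 i2. biprod C A B S p1 p2 i1 i2) \<and>
   \<comment> \<open>shift: additive automorphism\<close>
   bij_betw (sh C) (Ob C) (Ob C) \<and>
   (\<forall>X \<in> Ob C. \<forall>Y \<in> Ob C. bij_betw (shm C) (Hom C X Y) (Hom C (sh C X) (sh C Y))) \<and>
   (\<forall>X \<in> Ob C. shm C (idt C X) = idt C (sh C X)) \<and>
   (\<forall>X Y Z f g. f \<in> Hom C X Y \<longrightarrow> g \<in> Hom C Y Z \<longrightarrow>
       shm C (cmp C g f) = cmp C (shm C g) (shm C f)) \<and>
   (\<forall>X Y f g. f \<in> Hom C X Y \<longrightarrow> g \<in> Hom C X Y \<longrightarrow>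
       shm C (plus C f g) = plus C (shm C f) (shm C g)) \<and>
   \<comment> \<open>distinguished triangles are triangles\<close>
   (\<forall>X Y Z u v w. (X, Y, Z, u, v, w) \<in> Dist C \<longrightarrow>
       u \<in> Hom C X Y \<and> v \<in> Hom C Y Z \<and> w \<in> Hom C Z (sh C X)) \<and>
   \<comment> \<open>TR1\<close>
   (\<forall>T T' f g h. T \<in> Dist C \<longrightarrow> tri_iso C T T' f g h \<longrightarrow> T' \<in> Dist C) \<and>
   (\<forall>X \<in> Ob C. \<forall>Z. is_zero_obj C Z \<longrightarrow>
       (X, X, Z, idt C X, zer C X Z, zer C Z (sh C X)) \<in> Dist C) \<and>
   (\<forall>X Y u. u \<in> Hom C X Y \<longrightarrow> (\<exists>Z v w. (X, Y, Z, u, v, w) \<in> Dist C)) \<and>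
   \<comment> \<open>TR2 (rotation)\<close>
   (\<forall>X Y Z u v w. u \<in> Hom C X Y \<longrightarrow>
       ((X, Y, Z, u, v, w) \<in> Dist C \<longleftrightarrow>
        (Y, Z, sh C X, v, w, tneg C (sh C X) (sh C Y) (shm C u)) \<in> Dist C)) \<and>
   \<comment> \<open>TR3\<close>
   (\<forall>X Y Z u v w X' Y' Z' u' v' w' f g.
       (X, Y, Z, u, v, w) \<in> Dist C \<longrightarrow> (X', Y', Z', u', v', w') \<in> Dist C \<longrightarrow>
       f \<in> Hom C X X' \<longrightarrow> g \<in> Hom C Y Y' \<longrightarrow> cmp C g u = cmp C u' f \<longrightarrow>
       (\<exists>h. tri_morph C (X, Y, Z, u, v, w) (X', Y', Z', u', v', w') f g h)) \<and>
   \<comment> \<open>TR4 (octahedral axiom)\<close>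
   (\<forall>X Y Z Z' X' Y' u v i i' j j' k k'.
       (X, Y, Z', u, i, i') \<in> Dist C \<longrightarrow>
       (Y, Z, X', v, j, j') \<in> Dist C \<longrightarrow>
       (X, Z, Y', cmp C v u, k, k') \<in> Dist C \<longrightarrow>
       (\<exists>f g. (Z', Y', X', f, g, cmp C (shm C i) j') \<in> Dist C \<and>
              cmp C f i = cmp C k v \<and> cmp C k' f = i' \<and>
              cmp C g k = j \<and> cmp C j' g = cmp C (shm C u) k'))"

text \<open>The extension closure \<F>(\<X>): M_{k-1} \<rightarrow> M_k \<rightarrow> X_k \<rightarrow> M_{k-1}[1], k = 0..n,
  with M_{-1} = 0 = X_0, M_n = M, X_k \<in> \<X> for k \<ge> 1.  To index by nat we
  write Ms k for M_{k-1} (k = 0..n+1).\<close>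
definition filt :: "('o, 'm) tcat \<Rightarrow> 'o set \<Rightarrow> 'o set" where
  "filt C \<X> = {M. \<exists>(n::nat) (Ms::nat \<Rightarrow> 'o) (Xs::nat \<Rightarrow> 'o) us vs ws.
      is_zero_obj C (Ms 0) \<and> is_zero_obj C (Xs 0) \<and> Ms (Suc n) = M \<and>
      (\<forall>k \<in> {1..n}. Xs k \<in> \<X>) \<and>
      (\<forall>k \<le> n. (Ms k, Ms (Suc k), Xs k, us k, vs k, ws k) \<in> Dist C)}"

text \<open>The linear order \<le> on [1,t] is the relation r;
  j > i means (i,j) \<in> r and i \<noteq> j.  Q is a chosen direct sum of Q(1),...,Q(t), with
  projections pQ and injections eQ.  The distinguished triangles are
  K(i) \<rightarrow>(a i) Q(i) \<rightarrow>(\<beta> i) \<Theta>(i) \<rightarrow>(c i) K(i)[1].\<close>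
definition theta_proj_system ::
  "('o, 'm) tcat \<Rightarrow> nat \<Rightarrow> (nat \<times> nat) set \<Rightarrow> (nat \<Rightarrow> 'o) \<Rightarrow> (nat \<Rightarrow> 'o) \<Rightarrow> 'o \<Rightarrow>
   (nat \<Rightarrow> 'm) \<Rightarrow> (nat \<Rightarrow> 'm) \<Rightarrow> (nat \<Rightarrow> 'o) \<Rightarrow> (nat \<Rightarrow> 'm) \<Rightarrow> (nat \<Rightarrow> 'm) \<Rightarrow> (nat \<Rightarrow> 'm) \<Rightarrow> bool"
  where
  "theta_proj_system C t r \<Theta> Q Qs pQ eQ K a \<beta> c \<longleftrightarrow>
     linear_order_on {1..t} r \<and>
     (\<forall>i \<in> {1..t}. \<Theta> i \<in> Ob C \<and> \<not> is_zero_obj C (\<Theta> i)) \<and>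
     (\<forall>i \<in> {1..t}. \<forall>j \<in> {1..t}. (i, j) \<in> r \<and> i \<noteq> j \<longrightarrow> hom_zero C (\<Theta> j) (\<Theta> i)) \<and>
     (\<forall>i \<in> {1..t}. indecomposable C (Q i)) \<and>
     biprod_fam C {1..t} Q Qs pQ eQ \<and>
     (\<forall>j \<in> {1..t}. hom_zero C Qs (sh C (\<Theta> j)) \<and> hom_zero C Qs (unsh C (\<Theta> j))) \<and>
     (\<forall>i \<in> {1..t}. (K i, Q i, \<Theta> i, a i, \<beta> i, c i) \<in> Dist C \<and>
        K i \<in> filt C {\<Theta> j | j. j \<in> {1..t} \<and> (i, j) \<in> r \<and> i \<noteq> j} \<and>
        hom_zero C (sh C (K i)) (\<Theta> i))"

end

theory Submission
  imports Defs "HOL-Algebra.Coset"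
begin

text \<open>Everything follows from the exactness of Hom(-,W) on distinguished triangles:
  if X \<rightarrow> Y \<rightarrow> Z \<rightarrow> X[1] is distinguished and g \<circ> u = 0 for g : Y \<rightarrow> W, then g factors
  through Y \<rightarrow> Z (TR3 against the triangle 0 \<rightarrow> W \<rightarrow> W \<rightarrow> 0).  Consequently Hom(-,W) = 0 is
  closed under extensions, hence vanishes on the whole extension closure \<F>(\<X>) once it
  vanishes on \<X>.  Since K(j) \<in> \<F>(\<Theta>(l) : l > j) and Hom(\<Theta>(l),\<Theta>(i)) = 0 for l > j \<ge> i,
  this gives Hom(K(j),\<Theta>(i)) = 0, and the triangle Q(j) \<rightarrow> \<Theta>(j) \<rightarrow> K(j)[1] together with
  Hom(Q,\<Theta>(i)[1]) = 0 gives Hom(\<Theta>(j),\<Theta>(i)[1]) = 0.  Precomposition with \<beta>(j) is then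
  surjective because Hom(K(j),\<Theta>(i)) = 0, and injective because either i = j and
  Hom(K(j)[1],\<Theta>(j)) = 0, or i < j and Hom(\<Theta>(j),\<Theta>(i)) = 0.  For (c), rotating the
  triangle of \<Theta>(i) puts \<Theta>(i)[1] between Q(i)[1] and K(i)[2].\<close>

lemma homgrp_simps [simp]:
  "carrier (homgrp C X Y) = Hom C X Y"
  "mult (homgrp C X Y) = plus C"
  "one (homgrp C X Y) = zer C X Y"
  by (simp_all add: homgrp_def)

locale triangulated_category =
  fixes C :: "('o, 'm) tcat"
  assumes triangulated: "triangulated C"
begin

lemma hom_ob_empty [rule_format]:
  "\<forall>X Y. (X \<notin> Ob C \<or> Y \<notin> Ob C) \<longrightarrow> Hom C X Y = {}"
  using triangulated unfolding triangulated_def by (elim conjE) assumption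

lemma cmp_in [rule_format]:
  "\<forall>X Y Z f g. f \<in> Hom C X Y \<longrightarrow> g \<in> Hom C Y Z \<longrightarrow> cmp C g f \<in> Hom C X Z"
  using triangulated unfolding triangulated_def by (elim conjE) assumption

lemma cmp_assoc [rule_format]:
  "\<forall>W X Y Z f g h. f \<in> Hom C W X \<longrightarrow> g \<in> Hom C X Y \<longrightarrow> h \<in> Hom C Y Z \<longrightarrow>
       cmp C h (cmp C g f) = cmp C (cmp C h g) f"
  using triangulated unfolding triangulated_def by (elim conjE) assumption

lemma cmp_idt [rule_format]:
  "\<forall>X Y f. f \<in> Hom C X Y \<longrightarrow> cmp C (idt C Y) f = f \<and> cmp C f (idt C X) = f"
  using triangulated unfolding triangulated_def by (elim conjE) assumption

lemma comm_group_homgrp [rule_format]: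
  "\<forall>X \<in> Ob C. \<forall>Y \<in> Ob C. comm_group (homgrp C X Y)"
  using triangulated unfolding triangulated_def by (elim conjE) assumption

lemma cmp_plus_left [rule_format]:
  "\<forall>X Y Z f g g'. f \<in> Hom C X Y \<longrightarrow> g \<in> Hom C Y Z \<longrightarrow> g' \<in> Hom C Y Z \<longrightarrow>
       cmp C (plus C g g') f = plus C (cmp C g f) (cmp C g' f)"
  using triangulated unfolding triangulated_def by (elim conjE) assumption

lemma zero_obj_exists: "\<exists>Z. is_zero_obj C Z"
  using triangulated unfolding triangulated_def by (elim conjE) assumption

lemma bij_betw_sh: "bij_betw (sh C) (Ob C) (Ob C)"
  using triangulated unfolding triangulated_def by (elim conjE) assumption

lemma bij_betw_shm [rule_format]:
  "\<forall>X \<in> Ob C. \<forall>Y \<in> Ob C. bij_betw (shm C) (Hom C X Y) (Hom C (sh C X) (sh C Y))"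
  using triangulated unfolding triangulated_def by (elim conjE) assumption

lemma Dist_homs [rule_format]:
  "\<forall>X Y Z u v w. (X, Y, Z, u, v, w) \<in> Dist C \<longrightarrow>
       u \<in> Hom C X Y \<and> v \<in> Hom C Y Z \<and> w \<in> Hom C Z (sh C X)"
  using triangulated unfolding triangulated_def by (elim conjE) assumption

lemma Dist_idt_zero [rule_format]:
  "\<forall>X \<in> Ob C. \<forall>Z. is_zero_obj C Z \<longrightarrow>
       (X, X, Z, idt C X, zer C X Z, zer C Z (sh C X)) \<in> Dist C"
  using triangulated unfolding triangulated_def by (elim conjE) assumption

lemma Dist_rotate_iff [rule_format]:
  "\<forall>X Y Z u v w. u \<in> Hom C X Y \<longrightarrow>
       ((X, Y, Z, u, v, w) \<in> Dist C \<longleftrightarrow>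
        (Y, Z, sh C X, v, w, tneg C (sh C X) (sh C Y) (shm C u)) \<in> Dist C)"
  using triangulated unfolding triangulated_def by (elim conjE) assumption

lemma Dist_tri_morph_exists [rule_format]:
  "\<forall>X Y Z u v w X' Y' Z' u' v' w' f g.
       (X, Y, Z, u, v, w) \<in> Dist C \<longrightarrow> (X', Y', Z', u', v', w') \<in> Dist C \<longrightarrow>
       f \<in> Hom C X X' \<longrightarrow> g \<in> Hom C Y Y' \<longrightarrow> cmp C g u = cmp C u' f \<longrightarrow>
       (\<exists>h. tri_morph C (X, Y, Z, u, v, w) (X', Y', Z', u', v', w') f g h)"
  using triangulated unfolding triangulated_def by (elim conjE) assumption

lemmas cmp_idt_left = cmp_idt[THEN conjunct1]
   and cmp_idt_right = cmp_idt[THEN conjunct2]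

lemma hom_obD: "f \<in> Hom C X Y \<Longrightarrow> X \<in> Ob C \<and> Y \<in> Ob C"
  using hom_ob_empty by blast

lemma group_homgrp: "X \<in> Ob C \<Longrightarrow> Y \<in> Ob C \<Longrightarrow> group (homgrp C X Y)"
  using comm_group_homgrp comm_group.axioms(2) by blast

lemma zer_in: "X \<in> Ob C \<Longrightarrow> Y \<in> Ob C \<Longrightarrow> zer C X Y \<in> Hom C X Y"
  using group.is_monoid[OF group_homgrp] monoid.one_closed by fastforce

lemma cmp_zer_left:
  assumes f: "f \<in> Hom C X Y" and Z: "Z \<in> Ob C"
  shows "cmp C (zer C Y Z) f = zer C X Z"
proof -
  have X: "X \<in> Ob C" and Y: "Y \<in> Ob C" using hom_obD[OF f] by auto
  let ?z = "zer C Y Z"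
  have z: "?z \<in> Hom C Y Z" using zer_in Y Z by auto
  have "plus C ?z ?z = ?z" using group.is_monoid[OF group_homgrp[OF Y Z]] monoid.l_one z by fastforce
  then have "cmp C ?z f = plus C (cmp C ?z f) (cmp C ?z f)" using cmp_plus_left f z by metis
  moreover have "cmp C ?z f \<in> Hom C X Z" using cmp_in f z by auto
  ultimately show ?thesis using group.l_cancel_one'[OF group_homgrp[OF X Z]] by fastforce
qed

lemma hom_zero_iff:
  "X \<in> Ob C \<Longrightarrow> Y \<in> Ob C \<Longrightarrow> hom_zero C X Y \<longleftrightarrow> (\<forall>f\<in>Hom C X Y. \<forall>g\<in>Hom C X Y. f = g)"
  unfolding hom_zero_def using zer_in[of X Y] by auto

lemma hom_zeroI:
  "X \<in> Ob C \<Longrightarrow> Y \<in> Ob C \<Longrightarrow> (\<And>f. f \<in> Hom C X Y \<Longrightarrow> f = zer C X Y) \<Longrightarrow> hom_zero C X Y"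
  unfolding hom_zero_def using zer_in[of X Y] by blast

lemma hom_zeroD: "hom_zero C X Y \<Longrightarrow> f \<in> Hom C X Y \<Longrightarrow> f = zer C X Y"
  unfolding hom_zero_def by blast

lemma zero_obj_hom_zero:
  "is_zero_obj C Z \<Longrightarrow> X \<in> Ob C \<Longrightarrow> hom_zero C Z X \<and> hom_zero C X Z"
  using hom_zero_iff unfolding is_zero_obj_def by metis

lemma sh_in_Ob: "X \<in> Ob C \<Longrightarrow> sh C X \<in> Ob C"
  using bij_betw_apply[OF bij_betw_sh] .

lemma unsh_in_Ob: "Y \<in> Ob C \<Longrightarrow> unsh C Y \<in> Ob C"
  and sh_unsh: "Y \<in> Ob C \<Longrightarrow> sh C (unsh C Y) = Y"
  using bij_betw_imp_surj_on[OF bij_betw_sh] unfolding unsh_def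
  by (metis inv_into_into, metis f_inv_into_f)

lemma hom_zero_sh_iff:
  assumes X: "X \<in> Ob C" and Y: "Y \<in> Ob C"
  shows "hom_zero C (sh C X) (sh C Y) \<longleftrightarrow> hom_zero C X Y"
proof -
  have b: "bij_betw (shm C) (Hom C X Y) (Hom C (sh C X) (sh C Y))" using bij_betw_shm X Y .
  show ?thesis
    unfolding hom_zero_iff[OF sh_in_Ob[OF X] sh_in_Ob[OF Y]] hom_zero_iff[OF X Y]
      bij_betw_imp_surj_on[OF b, symmetric]
    using bij_betw_imp_inj_on[OF b] unfolding inj_on_def by auto
qed

lemma zero_obj_sh:
  assumes Z: "is_zero_obj C Z"
  shows "is_zero_obj C (sh C Z)"
proof -
  have Z_ob: "Z \<in> Ob C" using Z unfolding is_zero_obj_def by blast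
  have "(\<exists>!f. f \<in> Hom C (sh C Z) X) \<and> (\<exists>!f. f \<in> Hom C X (sh C Z))" if X: "X \<in> Ob C" for X
  proof -
    obtain X' where X': "X' \<in> Ob C" "X = sh C X'"
      using X bij_betw_imp_surj_on[OF bij_betw_sh] by blast
    have "hom_zero C (sh C Z) X \<and> hom_zero C X (sh C Z)"
      unfolding X'(2) hom_zero_sh_iff[OF Z_ob X'(1)] hom_zero_sh_iff[OF X'(1) Z_ob]
      using zero_obj_hom_zero[OF Z X'(1)] .
    then show ?thesis unfolding hom_zero_def by (intro conjI; simp)
  qed
  then show ?thesis unfolding is_zero_obj_def using sh_in_Ob[OF Z_ob] by blast
qed

lemma Dist_rotate:
  assumes D: "(X, Y, Z, u, v, w) \<in> Dist C"
  shows "(Y, Z, sh C X, v, w, tneg C (sh C X) (sh C Y) (shm C u)) \<in> Dist C"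
  using Dist_homs[OF D] Dist_rotate_iff[THEN iffD1, OF _ D] by blast

lemma Dist_zero_idt:
  assumes W: "W \<in> Ob C" and Z: "is_zero_obj C Z"
  shows "(Z, W, W, zer C Z W, idt C W, zer C W (sh C Z)) \<in> Dist C"
proof -
  have Z_ob: "Z \<in> Ob C" using Z unfolding is_zero_obj_def by blast
  have shZ: "is_zero_obj C (sh C Z)" using zero_obj_sh[OF Z] .
  have z: "zer C Z W \<in> Hom C Z W" using zer_in Z_ob W by blast
  have "shm C (zer C Z W) \<in> Hom C (sh C Z) (sh C W)"
    using bij_betw_shm[OF Z_ob W] z unfolding bij_betw_def by blast
  then have "tneg C (sh C Z) (sh C W) (shm C (zer C Z W)) \<in> Hom C (sh C Z) (sh C W)"
    unfolding tneg_def using group.inv_closed[OF group_homgrp[OF sh_in_Ob[OF Z_ob] sh_in_Ob[OF W]]]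
    by simp
  then have "tneg C (sh C Z) (sh C W) (shm C (zer C Z W)) = zer C (sh C Z) (sh C W)"
    using zero_obj_hom_zero[OF shZ sh_in_Ob[OF W]] hom_zeroD by blast
  then show ?thesis using Dist_rotate_iff[OF z, THEN iffD2] Dist_idt_zero[OF W shZ] by simp
qed

lemma Dist_lift:
  assumes D: "(X, Y, Z, u, v, w) \<in> Dist C" and g: "g \<in> Hom C Y W" and gu: "cmp C g u = zer C X W"
  shows "\<exists>h \<in> Hom C Z W. cmp C h v = g"
proof -
  obtain Z0 where Z0: "is_zero_obj C Z0" using zero_obj_exists by blast
  have Z0_ob: "Z0 \<in> Ob C" using Z0 unfolding is_zero_obj_def by blast
  have W: "W \<in> Ob C" using hom_obD g by blast
  have X: "X \<in> Ob C" using hom_obD Dist_homs[OF D] by blast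
  have f: "zer C X Z0 \<in> Hom C X Z0" using zer_in X Z0_ob by blast
  have "cmp C g u = cmp C (zer C Z0 W) (zer C X Z0)" using cmp_zer_left[OF f W] gu by simp
  then obtain h where
    "tri_morph C (X, Y, Z, u, v, w) (Z0, W, W, zer C Z0 W, idt C W, zer C W (sh C Z0)) (zer C X Z0) g h"
    using Dist_tri_morph_exists[OF D Dist_zero_idt[OF W Z0] f g] by blast
  then have "h \<in> Hom C Z W" "cmp C h v = cmp C (idt C W) g" unfolding tri_morph_def by auto
  then show ?thesis using cmp_idt_left[OF g] by auto
qed

lemma hom_zero_Dist_middle:
  assumes D: "(X, Y, Z, u, v, w) \<in> Dist C" and W: "W \<in> Ob C"
    and X: "hom_zero C X W" and Z: "hom_zero C Z W"
  shows "hom_zero C Y W"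
proof (rule hom_zeroI)
  have u: "u \<in> Hom C X Y" and v: "v \<in> Hom C Y Z" using Dist_homs[OF D] by auto
  then show "Y \<in> Ob C" using hom_obD by blast
  show "W \<in> Ob C" by (fact W)
  fix g assume g: "g \<in> Hom C Y W"
  have "cmp C g u = zer C X W" using hom_zeroD[OF X] cmp_in[OF u g] .
  then obtain h where h: "h \<in> Hom C Z W" "cmp C h v = g" using Dist_lift[OF D g] by blast
  then have "h = zer C Z W" using hom_zeroD[OF Z] by blast
  then show "g = zer C Y W" using h cmp_zer_left[OF v W] by simp
qed

lemma hom_zero_biprod_summand:
  assumes B: "biprod_fam C I Q S p e" and i: "i \<in> I" and S: "hom_zero C S W" and W: "W \<in> Ob C"
  shows "hom_zero C (Q i) W"
proof (rule hom_zeroI)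
  have p: "p i \<in> Hom C S (Q i)" and e: "e i \<in> Hom C (Q i) S" and pe: "cmp C (p i) (e i) = idt C (Q i)"
    using B i unfolding biprod_fam_def by auto
  then show "Q i \<in> Ob C" using hom_obD by blast
  show "W \<in> Ob C" by (fact W)
  fix f assume f: "f \<in> Hom C (Q i) W"
  have "f = cmp C f (idt C (Q i))" using cmp_idt_right f by metis
  also have "\<dots> = cmp C (cmp C f (p i)) (e i)" using pe cmp_assoc e p f by metis
  also have "cmp C f (p i) = zer C S W" using hom_zeroD[OF S cmp_in[OF p f]] .
  also have "cmp C (zer C S W) (e i) = zer C (Q i) W" using cmp_zer_left[OF e W] .
  finally show "f = zer C (Q i) W" .
qed

lemma hom_zero_filt:
  assumes M: "M \<in> filt C \<X>" and W: "W \<in> Ob C" and \<X>: "\<And>X. X \<in> \<X> \<Longrightarrow> hom_zero C X W"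
  shows "hom_zero C M W"
proof -
  obtain n Ms Xs us vs ws where M0: "is_zero_obj C (Ms 0)" and X0: "is_zero_obj C (Xs 0)"
    and Mn: "Ms (Suc n) = M" and Xs: "\<forall>k \<in> {1..n}. Xs k \<in> \<X>"
    and Ds: "\<forall>k \<le> n. (Ms k, Ms (Suc k), Xs k, us k, vs k, ws k) \<in> Dist C"
    using M unfolding filt_def by blast
  have "hom_zero C (Ms k) W" if "k \<le> Suc n" for k
    using that
  proof (induction k)
    case 0
    then show ?case using zero_obj_hom_zero M0 W by blast
  next
    case (Suc k)
    have k: "k \<le> n" using Suc.prems by simp
    have "hom_zero C (Xs k) W"
      using zero_obj_hom_zero[OF X0 W] Xs \<X> k by (cases k) auto
    then show ?case using hom_zero_Dist_middle[OF Ds[rule_format, OF k] W] Suc.IH k by simp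
  qed
  then show ?thesis using Mn by blast
qed

lemma precomp_in_hom:
  assumes v: "v \<in> Hom C Y Z" and W: "W \<in> Ob C"
  shows "(\<lambda>g. cmp C g v) \<in> hom (homgrp C Z W) (homgrp C Y W)"
  by (rule homI) (auto intro: cmp_in[OF v] simp: cmp_plus_left[OF v])

lemma precomp_image_eq:
  assumes D: "(X, Y, Z, u, v, w) \<in> Dist C" and X: "hom_zero C X W"
  shows "(\<lambda>g. cmp C g v) ` Hom C Z W = Hom C Y W"
proof
  have u: "u \<in> Hom C X Y" and v: "v \<in> Hom C Y Z" using Dist_homs[OF D] by auto
  show "(\<lambda>g. cmp C g v) ` Hom C Z W \<subseteq> Hom C Y W" using cmp_in[OF v] by auto
  show "Hom C Y W \<subseteq> (\<lambda>g. cmp C g v) ` Hom C Z W"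
  proof
    fix f assume f: "f \<in> Hom C Y W"
    have "cmp C f u = zer C X W" using hom_zeroD[OF X cmp_in[OF u f]] .
    then show "f \<in> (\<lambda>g. cmp C g v) ` Hom C Z W" using Dist_lift[OF D f] by force
  qed
qed

lemma precomp_inj_on:
  assumes D: "(X, Y, Z, u, v, w) \<in> Dist C" and W: "W \<in> Ob C" and shX: "hom_zero C (sh C X) W"
  shows "inj_on (\<lambda>g. cmp C g v) (Hom C Z W)"
proof -
  have v: "v \<in> Hom C Y Z" and w: "w \<in> Hom C Z (sh C X)" using Dist_homs[OF D] by auto
  have Y: "Y \<in> Ob C" and Z: "Z \<in> Ob C" using hom_obD[OF v] by auto
  interpret group_hom "homgrp C Z W" "homgrp C Y W" "\<lambda>g. cmp C g v"
    unfolding group_hom_def group_hom_axioms_def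
    using group_homgrp[OF Z W] group_homgrp[OF Y W] precomp_in_hom[OF v W] by blast
  have "kernel (homgrp C Z W) (homgrp C Y W) (\<lambda>g. cmp C g v) \<subseteq> {zer C Z W}"
  proof
    fix g assume "g \<in> kernel (homgrp C Z W) (homgrp C Y W) (\<lambda>g. cmp C g v)"
    then have g: "g \<in> Hom C Z W" and gv: "cmp C g v = zer C Y W" unfolding kernel_def by auto
    obtain h where h: "h \<in> Hom C (sh C X) W" "cmp C h w = g"
      using Dist_lift[OF Dist_rotate[OF D] g gv] by blast
    then show "g \<in> {zer C Z W}" using hom_zeroD[OF shX h(1)] cmp_zer_left[OF w W] by simp
  qed
  then have "kernel (homgrp C Z W) (homgrp C Y W) (\<lambda>g. cmp C g v) = {zer C Z W}"
    using zer_in[OF Z W] cmp_zer_left[OF v W] unfolding kernel_def by auto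
  then show ?thesis using inj_iff_trivial_ker by simp
qed

end

locale theta_projective_system = triangulated_category C for C :: "('o, 'm) tcat" +
  fixes t r \<Theta> Q Qs pQ eQ K a \<beta> c
  assumes system: "theta_proj_system C t r \<Theta> Q Qs pQ eQ K a \<beta> c"
begin

lemma trans_r: "trans r" and antisym_r: "antisym r"
  using system unfolding theta_proj_system_def linear_order_on_def partial_order_on_def
    preorder_on_def by blast+

lemma Theta_in_Ob: "i \<in> {1..t} \<Longrightarrow> \<Theta> i \<in> Ob C"
  using system unfolding theta_proj_system_def by blast

lemma hom_zero_Theta_greater:
  "i \<in> {1..t} \<Longrightarrow> j \<in> {1..t} \<Longrightarrow> (i, j) \<in> r \<Longrightarrow> i \<noteq> j \<Longrightarrow> hom_zero C (\<Theta> j) (\<Theta> i)"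
  using system unfolding theta_proj_system_def by blast

lemma biprod_Qs: "biprod_fam C {1..t} Q Qs pQ eQ"
  using system unfolding theta_proj_system_def by blast

lemma hom_zero_Qs_sh_Theta: "j \<in> {1..t} \<Longrightarrow> hom_zero C Qs (sh C (\<Theta> j))"
  and hom_zero_Qs_unsh_Theta: "j \<in> {1..t} \<Longrightarrow> hom_zero C Qs (unsh C (\<Theta> j))"
  using system unfolding theta_proj_system_def by blast+

lemma Dist_K_Q_Theta: "i \<in> {1..t} \<Longrightarrow> (K i, Q i, \<Theta> i, a i, \<beta> i, c i) \<in> Dist C"
  and K_in_filt: "i \<in> {1..t} \<Longrightarrow> K i \<in> filt C {\<Theta> j | j. j \<in> {1..t} \<and> (i, j) \<in> r \<and> i \<noteq> j}"
  and hom_zero_sh_K_Theta: "i \<in> {1..t} \<Longrightarrow> hom_zero C (sh C (K i)) (\<Theta> i)"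
  using system unfolding theta_proj_system_def by blast+

lemma K_in_Ob: "i \<in> {1..t} \<Longrightarrow> K i \<in> Ob C"
  and Q_in_Ob: "i \<in> {1..t} \<Longrightarrow> Q i \<in> Ob C"
  using hom_obD Dist_homs[OF Dist_K_Q_Theta] by blast+

lemma hom_zero_Q_sh_Theta: "i \<in> {1..t} \<Longrightarrow> j \<in> {1..t} \<Longrightarrow> hom_zero C (Q j) (sh C (\<Theta> i))"
  using hom_zero_biprod_summand[OF biprod_Qs] hom_zero_Qs_sh_Theta sh_in_Ob Theta_in_Ob by blast

lemma hom_zero_Q_unsh_Theta: "i \<in> {1..t} \<Longrightarrow> j \<in> {1..t} \<Longrightarrow> hom_zero C (Q j) (unsh C (\<Theta> i))"
  using hom_zero_biprod_summand[OF biprod_Qs] hom_zero_Qs_unsh_Theta unsh_in_Ob Theta_in_Ob by blast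

lemma hom_zero_K_Theta:
  assumes i: "i \<in> {1..t}" and j: "j \<in> {1..t}" and ij: "(i, j) \<in> r"
  shows "hom_zero C (K j) (\<Theta> i)"
proof (rule hom_zero_filt[OF K_in_filt[OF j] Theta_in_Ob[OF i]])
  fix X assume "X \<in> {\<Theta> l | l. l \<in> {1..t} \<and> (j, l) \<in> r \<and> j \<noteq> l}"
  then obtain l where l: "X = \<Theta> l" "l \<in> {1..t}" "(j, l) \<in> r" "j \<noteq> l" by blast
  have "(i, l) \<in> r" using trans_r ij l(3) unfolding trans_def by blast
  moreover have "i \<noteq> l" using antisym_r ij l(3,4) unfolding antisym_def by blast
  ultimately show "hom_zero C X (\<Theta> i)" using hom_zero_Theta_greater i l(1,2) by blast
qed

lemma hom_zero_Theta_sh_Theta: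
  assumes i: "i \<in> {1..t}" and j: "j \<in> {1..t}" and ij: "(i, j) \<in> r"
  shows "hom_zero C (\<Theta> j) (sh C (\<Theta> i))"
proof (rule hom_zero_Dist_middle[OF Dist_rotate[OF Dist_K_Q_Theta[OF j]]])
  show "hom_zero C (Q j) (sh C (\<Theta> i))" using hom_zero_Q_sh_Theta i j .
  show "hom_zero C (sh C (K j)) (sh C (\<Theta> i))"
    using hom_zero_K_Theta[OF i j ij] hom_zero_sh_iff K_in_Ob[OF j] Theta_in_Ob[OF i] by blast
qed (use sh_in_Ob Theta_in_Ob i in blast)

lemma precomp_beta_iso:
  assumes i: "i \<in> {1..t}" and j: "j \<in> {1..t}" and ij: "(i, j) \<in> r"
  shows "(\<lambda>g. cmp C g (\<beta> j)) \<in> iso (homgrp C (\<Theta> j) (\<Theta> i)) (homgrp C (Q j) (\<Theta> i))"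
proof -
  note D = Dist_K_Q_Theta[OF j]
  have "inj_on (\<lambda>g. cmp C g (\<beta> j)) (Hom C (\<Theta> j) (\<Theta> i))"
  proof (cases "i = j")
    case True
    then show ?thesis using precomp_inj_on[OF D Theta_in_Ob[OF i]] hom_zero_sh_K_Theta[OF j] by simp
  next
    case False
    then show ?thesis using hom_zero_Theta_greater[OF i j ij] unfolding hom_zero_def by simp
  qed
  moreover have "(\<lambda>g. cmp C g (\<beta> j)) ` Hom C (\<Theta> j) (\<Theta> i) = Hom C (Q j) (\<Theta> i)"
    using precomp_image_eq[OF D hom_zero_K_Theta[OF i j ij]] .
  moreover have "(\<lambda>g. cmp C g (\<beta> j)) \<in> hom (homgrp C (\<Theta> j) (\<Theta> i)) (homgrp C (Q j) (\<Theta> i))"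
    using precomp_in_hom Dist_homs[OF D] Theta_in_Ob[OF i] by blast
  ultimately show ?thesis unfolding iso_iff by simp
qed

lemma hom_zero_Theta_unsh_Theta:
  assumes K2: "\<And>i j. i \<in> {1..t} \<Longrightarrow> j \<in> {1..t} \<Longrightarrow> hom_zero C (sh C (sh C (K j))) (\<Theta> i)"
    and i: "i \<in> {1..t}" and j: "j \<in> {1..t}"
  shows "hom_zero C (\<Theta> i) (unsh C (\<Theta> j))"
proof -
  have U: "unsh C (\<Theta> j) \<in> Ob C" and sh_U: "sh C (unsh C (\<Theta> j)) = \<Theta> j"
    using unsh_in_Ob sh_unsh Theta_in_Ob[OF j] by auto
  have "hom_zero C (sh C (Q i)) (\<Theta> j)"
    using hom_zero_Q_unsh_Theta[OF j i] hom_zero_sh_iff[OF Q_in_Ob[OF i] U] sh_U by simp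
  then have "hom_zero C (sh C (\<Theta> i)) (\<Theta> j)"
    using hom_zero_Dist_middle[OF
        Dist_rotate[OF Dist_rotate[OF Dist_rotate[OF Dist_rotate[OF Dist_K_Q_Theta[OF i]]]]]
        Theta_in_Ob[OF j]] K2[OF j i] by blast
  then show ?thesis using hom_zero_sh_iff[OF Theta_in_Ob[OF i] U] sh_U by simp
qed

end

theorem proposition5p5:
  fixes C :: "('o, 'm) tcat"
  assumes "triangulated C"
    and "theta_proj_system C t r \<Theta> Q Qs pQ eQ K a \<beta> c"
  shows "(\<forall>i \<in> {1..t}. \<forall>j \<in> {1..t}. (i, j) \<in> r \<longrightarrow>
            hom_zero C (K j) (\<Theta> i) \<and> hom_zero C (\<Theta> j) (sh C (\<Theta> i))) \<and>
         (\<forall>i \<in> {1..t}. \<forall>j \<in> {1..t}. (i, j) \<in> r \<longrightarrow>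
            (\<lambda>g. cmp C g (\<beta> j)) \<in> iso (homgrp C (\<Theta> j) (\<Theta> i)) (homgrp C (Q j) (\<Theta> i))) \<and>
         ((\<forall>i \<in> {1..t}. \<forall>j \<in> {1..t}. hom_zero C (sh C (sh C (K j))) (\<Theta> i)) \<longrightarrow>
         (\<forall>i \<in> {1..t}. \<forall>j \<in> {1..t}. hom_zero C (\<Theta> i) (unsh C (\<Theta> j))))"
proof -
  interpret theta_projective_system C t r \<Theta> Q Qs pQ eQ K a \<beta> c
    using assms by (simp add: theta_projective_system_def theta_projective_system_axioms_def
        triangulated_category_def)
  show ?thesis
    using hom_zero_K_Theta hom_zero_Theta_sh_Theta precomp_beta_iso hom_zero_Theta_unsh_Theta
    by blast
qed

end
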